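(* Let $M$ be a matroid on $E=\{0,\dots,n\}$ with dual matroid $M^\perp$. Then $\operatorname{crem}[\mathcal S_M]=[\mathcal Q_{M^\perp}^\vee]$ and $\operatorname{crem}[\mathcal Q_M]=[\mathcal S_{M^\perp}^\vee]$ in $K_T^0(X_E)$. In particular $\operatorname{crem}\, c(\mathcal S_M,u)=c(\mathcal Q_{M^\perp}^\vee,u)$ and $\operatorname{crem}\, c(\mathcal Q_M,u)=c(\mathcal S_{M^\perp}^\vee,u)$.
   Context: $X_E$ is the permutohedral variety (toric variety of the fan $\Sigma_E$ in $\mathbb R^E/\mathbb R\mathbf 1$ with cones $\operatorname{Cone}(\overline{\mathbf e}_{S_1},\dots,\overline{\mathbf e}_{S_k})$ for chains of nonempty proper subsets), with $T=(\mathbb C^* )^E$-fixed points $p_\sigma$ indexed by permutations $\sigma$ ($p_\sigma$ corresponds to the chain $S_i=\{\sigma(0),\dots,\sigma(i-1)\}$); $K_T^0(X_E)$ embeds in $\prod_\sigma\mathbb Z[T_0^{\pm1},\dots,T_n^{\pm1}]$ by restriction $[\mathcal E]\mapsto([\mathcal E]_\sigma)$. $B_\sigma(M)$ is the lexicographically first basis for the order $\sigma(0)\prec\cdots\prec\sigma(n)$; $[\mathcal S_M]_\sigma=\sum_{i\in B_\sigma(M)}T_i^{-1}$, $[\mathcal Q_M]_\sigma=\sum_{i\notin B_\sigma(M)}T_i^{-1}$; $\vee$ is the dual ($T_i\mapsto T_i^{-1}$), $c(\cdot,u)$ the non-equivariant Chern polynomial. The Cremona involution $\operatorname{crem}:X_E\to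 X_E$ is the toric morphism induced by $x\mapsto -x$ on $\Sigma_E$ (with $t\mapsto t^{-1}$ on tori); it acts on $K_T^0(X_E)$ by $(\operatorname{crem}[\mathcal E])_\sigma=[\mathcal E]_{\overline\sigma}(T_0^{-1},\dots,T_n^{-1})$ where $\overline\sigma(i)=\sigma(n-i)$, and on Chow rings by pullback ($=$ pushforward). *)

theory Defs
  imports Main "HOL-Library.Poly_Mapping" "HOL-Computational_Algebra.Polynomial"
    "HOL-Combinatorics.Permutations"
begin

definition matroid :: "'a set \<Rightarrow> 'a set set \<Rightarrow> bool" where
  "matroid E B \<longleftrightarrow> finite E \<and> B \<noteq> {} \<and> (\<forall>b\<in>B. b \<subseteq> E) \<and>
     (\<forall>b1\<in>B. \<forall>b2\<in>B. \<forall>x\<in>b1 - b2. \<exists>y\<in>b2 - b1. insert y (b1 - {x}) \<in> B)"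

definition matroid_dual :: "'a set \<Rightarrow> 'a set set \<Rightarrow> 'a set set" where
  "matroid_dual E B = (\<lambda>b. E - b) ` B"

text \<open>A permutation sigma of {0..n} induces the total order in which x precedes y
  iff the position inv sigma x is smaller than inv sigma y.  A subset is encoded as the
  increasing list of the positions of its elements; lexicographic comparison of these
  lists (all bases have equal size) is the lexicographic order on bases.\<close>

definition pos_list :: "(nat \<Rightarrow> nat) \<Rightarrow> nat set \<Rightarrow> nat list" where
  "pos_list \<sigma> b = sorted_list_of_set (inv \<sigma> ` b)"

definition lex_first_basis :: "(nat \<Rightarrow> nat) \<Rightarrow> nat set set \<Rightarrow> nat set" where
  "lex_first_basis \<sigma> M = (THE b. b \<in> M \<and>
      (\<forall>b'\<in>M. b' \<noteq> b \<longrightarrow> (pos_list \<sigma> b, pos_list \<sigma> b') \<in> lex less_than))"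

type_synonym laurent = "(nat \<Rightarrow>\<^sub>0 int) \<Rightarrow>\<^sub>0 int"

definition Tpow :: "nat \<Rightarrow> int \<Rightarrow> laurent" where
  "Tpow i k = Poly_Mapping.single (Poly_Mapping.single i k) 1"

definition lflip :: "laurent \<Rightarrow> laurent" where
  "lflip p = (\<Sum>a\<in>Poly_Mapping.keys p. Poly_Mapping.single (- a) (Poly_Mapping.lookup p a))"

text \<open>Elements of K_T^0(X_E), via their restrictions to the fixed points p_sigma.\<close>
type_synonym kclass = "(nat \<Rightarrow> nat) \<Rightarrow> laurent"

definition Keq :: "nat \<Rightarrow> kclass \<Rightarrow> kclass \<Rightarrow> bool" where
  "Keq n F G \<longleftrightarrow> (\<forall>\<sigma>. \<sigma> permutes {0..n} \<longrightarrow> F \<sigma> = G \<sigma>)"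

definition S_class :: "nat \<Rightarrow> nat set set \<Rightarrow> kclass" where
  "S_class n M \<sigma> = (\<Sum>i\<in>lex_first_basis \<sigma> M. Tpow i (-1))"

definition Q_class :: "nat \<Rightarrow> nat set set \<Rightarrow> kclass" where
  "Q_class n M \<sigma> = (\<Sum>i\<in>{0..n} - lex_first_basis \<sigma> M. Tpow i (-1))"

definition kdual :: "kclass \<Rightarrow> kclass" where
  "kdual F \<sigma> = lflip (F \<sigma>)"

definition rev_perm :: "nat \<Rightarrow> (nat \<Rightarrow> nat) \<Rightarrow> (nat \<Rightarrow> nat)" where
  "rev_perm n \<sigma> = (\<lambda>i. if i \<le> n then \<sigma> (n - i) else \<sigma> i)"

definition crem :: "nat \<Rightarrow> kclass \<Rightarrow> kclass" where
  "crem n F \<sigma> = lflip (F (rev_perm n \<sigma>))"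

text \<open>H_T^*(pt) = Z[t_0,...,t_n]; a character T^a has first Chern class sum a_i t_i.\<close>
type_synonym tpoly = "(nat \<Rightarrow>\<^sub>0 nat) \<Rightarrow>\<^sub>0 int"

definition tvar :: "nat \<Rightarrow> tpoly" where
  "tvar i = Poly_Mapping.single (Poly_Mapping.single i 1) 1"

definition char_c1 :: "(nat \<Rightarrow>\<^sub>0 int) \<Rightarrow> tpoly" where
  "char_c1 a = (\<Sum>i\<in>Poly_Mapping.keys a. of_int (Poly_Mapping.lookup a i) * tvar i)"

text \<open>Chern polynomial in u of a T-representation given by its character
  (a Laurent polynomial with nonnegative coefficients).\<close>
definition chernT :: "laurent \<Rightarrow> tpoly poly" where
  "chernT p = (\<Prod>a\<in>Poly_Mapping.keys p. [:1, char_c1 a:] ^ nat (Poly_Mapping.lookup p a))"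

definition chern_class :: "kclass \<Rightarrow> (nat \<Rightarrow> nat) \<Rightarrow> tpoly poly" where
  "chern_class F \<sigma> = chernT (F \<sigma>)"

text \<open>Substitution t_i -> -t_i.\<close>
definition tneg :: "tpoly \<Rightarrow> tpoly" where
  "tneg q = (\<Sum>m\<in>Poly_Mapping.keys q.
      Poly_Mapping.single m ((-1) ^ (\<Sum>i\<in>Poly_Mapping.keys m. Poly_Mapping.lookup m i)
                             * Poly_Mapping.lookup q m))"

definition crem_chow :: "nat \<Rightarrow> ((nat \<Rightarrow> nat) \<Rightarrow> tpoly poly) \<Rightarrow> (nat \<Rightarrow> nat) \<Rightarrow> tpoly poly" where
  "crem_chow n C \<sigma> = map_poly tneg (C (rev_perm n \<sigma>))"

definition Ceq :: "nat \<Rightarrow> ((nat \<Rightarrow> nat) \<Rightarrow> tpoly poly) \<Rightarrow> ((nat \<Rightarrow> nat) \<Rightarrow> tpoly poly) \<Rightarrow> bool" where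
  "Ceq n C D \<longleftrightarrow> (\<forall>\<sigma>. \<sigma> permutes {0..n} \<longrightarrow> C \<sigma> = D \<sigma>)"

end

theory Submission
  imports Defs
begin

(* At the fixed point p_sigma, crem reads off the class at p_sigma-bar and inverts all
   characters, so both K-theoretic identities reduce to B_sigma-bar(M) = E - B_sigma(M^perp).
   Take the basis b0 maximising the weight of b, the sum of 2^(position of x in sigma) over
   x in b.  For any other basis b, comparing weights shows that the sigma-last element of the
   symmetric difference of b0 and b lies in b0, and a basis exchange shows that the sigma-first
   one lies in b.  The first fact makes b0 lexicographically first for the reversed order; the
   second makes E - b0 lexicographically first among the complements of bases for sigma.
   The Chern identities follow, since t_i |-> -t_i on Chern polynomials is the same as
   inverting characters. *)

lemma matroid_basis_subset: "matroid E M \<Longrightarrow> b \<in> M \<Longrightarrow> b \<subseteq> E"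
  by (simp add: matroid_def)

lemma matroid_basis_finite: "matroid E M \<Longrightarrow> b \<in> M \<Longrightarrow> finite b"
  by (meson matroid_basis_subset matroid_def finite_subset)

lemma matroid_finite_bases: "matroid E M \<Longrightarrow> finite M"
  by (meson matroid_basis_subset matroid_def finite_Pow_iff finite_subset PowI subsetI)

lemma matroid_exchange:
  "matroid E M \<Longrightarrow> b1 \<in> M \<Longrightarrow> b2 \<in> M \<Longrightarrow> x \<in> b1 - b2 \<Longrightarrow> \<exists>y\<in>b2 - b1. insert y (b1 - {x}) \<in> M"
  by (simp add: matroid_def)

lemma matroid_bases_card_eq:
  assumes M: "matroid E M" and "b1 \<in> M" and "b2 \<in> M"
  shows "card b1 = card b2"
  using assms(2)
proof (induction "card (b1 - b2)" arbitrary: b1 rule: less_induct)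
  case less
  show ?case
  proof (cases "b1 - b2 = {}")
    case True
    have "b2 - b1 = {}"
      using True matroid_exchange[OF M \<open>b2 \<in> M\<close> less.prems] by blast
    with True have "b1 = b2" by blast
    then show ?thesis by simp
  next
    case False
    then obtain x where x: "x \<in> b1 - b2" by blast
    with matroid_exchange[OF M less.prems \<open>b2 \<in> M\<close>]
    obtain y where y: "y \<in> b2 - b1" and b3: "insert y (b1 - {x}) \<in> M" by blast
    have fin: "finite b1" using M less.prems by (rule matroid_basis_finite)
    have "insert y (b1 - {x}) - b2 = (b1 - b2) - {x}" using x y by blast
    then have "card (insert y (b1 - {x}) - b2) < card (b1 - b2)"
      using x fin by (metis card_Diff1_less finite_Diff)
    then have "card (insert y (b1 - {x})) = card b2"
      using less.hyps b3 by blast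
    moreover have "card (insert y (b1 - {x})) = card b1"
      using x y fin by (metis Diff_iff card_Suc_Diff1 card_insert_disjoint finite_Diff insertE)
    ultimately show ?thesis by simp
  qed
qed

definition pow2_weight :: "('a \<Rightarrow> nat) \<Rightarrow> 'a set \<Rightarrow> nat" where
  "pow2_weight p b = (\<Sum>x\<in>b. 2 ^ p x)"

lemma pow2_weight_less:
  assumes "finite A" and "finite B" and inj: "inj_on p (A \<union> B)"
    and z: "z \<in> A - B" and less: "\<forall>x\<in>B - A. p x < p z"
  shows "pow2_weight p B < pow2_weight p A"
proof -
  have "inj_on p (B - A)"
    using inj by (rule inj_on_subset) blast
  then have "(\<Sum>x\<in>B - A. 2 ^ p x) = (\<Sum>k\<in>p ` (B - A). (2::nat) ^ k)"
    by (simp add: sum.reindex)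
  also have "\<dots> \<le> (\<Sum>k=0..<p z. 2 ^ k)"
    using less by (intro sum_mono2) auto
  also have "\<dots> < 2 ^ p z"
    by (simp add: sum_power2)
  also have "\<dots> \<le> (\<Sum>x\<in>A - B. 2 ^ p x)"
    using z \<open>finite A\<close> by (intro member_le_sum) auto
  finally have "(\<Sum>x\<in>B - A. (2::nat) ^ p x) < (\<Sum>x\<in>A - B. 2 ^ p x)" .
  moreover have "pow2_weight p B = (\<Sum>x\<in>A \<inter> B. 2 ^ p x) + (\<Sum>x\<in>B - A. 2 ^ p x)"
    unfolding pow2_weight_def using sum.Int_Diff[OF \<open>finite B\<close>] by (metis Int_commute)
  moreover have "pow2_weight p A = (\<Sum>x\<in>A \<inter> B. 2 ^ p x) + (\<Sum>x\<in>A - B. 2 ^ p x)"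
    unfolding pow2_weight_def using sum.Int_Diff[OF \<open>finite A\<close>] by metis
  ultimately show ?thesis by simp
qed

lemma inj_on_obtain_strict_max:
  fixes p :: "'a \<Rightarrow> 'b::linorder"
  assumes "finite S" "S \<noteq> {}" "inj_on p S"
  obtains z where "z \<in> S" "\<forall>x\<in>S - {z}. p x < p z"
proof -
  have "Max (p ` S) \<in> p ` S"
    using assms by (intro Max_in) auto
  then obtain z where z: "z \<in> S" "p z = Max (p ` S)"
    by auto
  have "p x < p z" if "x \<in> S - {z}" for x
  proof -
    have "p x \<noteq> p z"
      using that z(1) \<open>inj_on p S\<close> by (auto dest: inj_onD)
    moreover have "p x \<le> p z"
      using that z(2) \<open>finite S\<close> by simp
    ultimately show ?thesis by simp
  qed
  with z(1) show ?thesis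
    using that by blast
qed

lemma inj_on_obtain_strict_min:
  fixes p :: "'a \<Rightarrow> 'b::linorder"
  assumes "finite S" "S \<noteq> {}" "inj_on p S"
  obtains z where "z \<in> S" "\<forall>x\<in>S - {z}. p z < p x"
proof -
  have "Min (p ` S) \<in> p ` S"
    using assms by (intro Min_in) auto
  then obtain z where z: "z \<in> S" "p z = Min (p ` S)"
    by auto
  have "p z < p x" if "x \<in> S - {z}" for x
  proof -
    have "p x \<noteq> p z"
      using that z(1) \<open>inj_on p S\<close> by (auto dest: inj_onD)
    moreover have "p z \<le> p x"
      using that z(2) \<open>finite S\<close> by simp
    ultimately show ?thesis by simp
  qed
  with z(1) show ?thesis
    using that by blast
qed

lemma max_weight_basis_max_symdiff:
  assumes M: "matroid E M" and inj: "inj_on p E"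
    and b0: "b0 \<in> M" and max: "\<forall>b\<in>M. pow2_weight p b \<le> pow2_weight p b0"
    and b: "b \<in> M" "b \<noteq> b0"
  shows "\<exists>m\<in>b0 - b. \<forall>x\<in>b - b0. p x < p m"
proof -
  let ?S = "(b0 - b) \<union> (b - b0)"
  have fin: "finite b0" "finite b"
    using matroid_basis_finite[OF M] b0 b by blast+
  have inj': "inj_on p (b \<union> b0)"
    by (rule inj_on_subset[OF inj]) (use matroid_basis_subset[OF M] b0 b in blast)
  have "finite ?S"
    using fin by blast
  moreover have "?S \<noteq> {}"
    using b(2) by blast
  moreover have "inj_on p ?S"
    by (rule inj_on_subset[OF inj']) blast
  ultimately obtain z where z: "z \<in> ?S" "\<forall>x\<in>?S - {z}. p x < p z"
    by (rule inj_on_obtain_strict_max)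
  have "z \<notin> b - b0"
  proof
    assume "z \<in> b - b0"
    with z(2) have "pow2_weight p b0 < pow2_weight p b"
      by (intro pow2_weight_less[OF fin(2,1) inj']) blast+
    with max b(1) show False
      using leD by blast
  qed
  with z show ?thesis by blast
qed

lemma max_weight_basis_min_symdiff:
  assumes M: "matroid E M" and inj: "inj_on p E"
    and b0: "b0 \<in> M" and max: "\<forall>b\<in>M. pow2_weight p b \<le> pow2_weight p b0"
    and b: "b \<in> M" "b \<noteq> b0"
  shows "\<exists>m\<in>b - b0. \<forall>x\<in>b0 - b. p m < p x"
proof -
  let ?S = "(b0 - b) \<union> (b - b0)"
  have fin: "finite b0" "finite b"
    using matroid_basis_finite[OF M] b0 b by blast+
  have inj': "inj_on p (b0 \<union> b)"
    by (rule inj_on_subset[OF inj]) (use matroid_basis_subset[OF M] b0 b in blast)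
  have "finite ?S"
    using fin by blast
  moreover have "?S \<noteq> {}"
    using b(2) by blast
  moreover have "inj_on p ?S"
    by (rule inj_on_subset[OF inj']) blast
  ultimately obtain z where z: "z \<in> ?S" "\<forall>x\<in>?S - {z}. p z < p x"
    by (rule inj_on_obtain_strict_min)
  have "z \<notin> b0 - b"
  proof
    assume z_in: "z \<in> b0 - b"
    then obtain y where y: "y \<in> b - b0" and b1: "insert y (b0 - {z}) \<in> M"
      using matroid_exchange[OF M b0 b(1)] by blast
    have "inj_on p (insert y (b0 - {z}) \<union> b0)"
      by (rule inj_on_subset[OF inj']) (use y in blast)
    moreover have "\<forall>x\<in>b0 - insert y (b0 - {z}). p x < p y"
      using z(2) y z_in by blast
    ultimately have "pow2_weight p b0 < pow2_weight p (insert y (b0 - {z}))"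
      using y fin(1) by (intro pow2_weight_less) auto
    with max b1 show False
      using leD by blast
  qed
  with z show ?thesis by blast
qed

lemma sorted_list_of_set_lex_less:
  fixes A B :: "nat set"
  assumes "finite A" "finite B" "card A = card B" "m \<in> A - B" "\<forall>x\<in>B - A. m < x"
  shows "(sorted_list_of_set A, sorted_list_of_set B) \<in> lex less_than"
  using assms
proof (induction "card A" arbitrary: A B)
  case 0
  then show ?case by auto
next
  case (Suc k)
  have ne: "A \<noteq> {}" "B \<noteq> {}"
    using Suc.hyps(2) Suc.prems(3) by auto
  have lists: "sorted_list_of_set A = Min A # sorted_list_of_set (A - {Min A})"
    "sorted_list_of_set B = Min B # sorted_list_of_set (B - {Min B})"
    using sorted_list_of_set_nonempty Suc.prems(1,2) ne by blast+
  have mins: "Min A \<in> A" "Min B \<in> B"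
    using Suc.prems(1,2) ne by simp_all
  show ?case
  proof (cases "Min A = Min B")
    case True
    have "(sorted_list_of_set (A - {Min A}), sorted_list_of_set (B - {Min B})) \<in> lex less_than"
      using Suc.hyps(2) Suc.prems mins True by (intro Suc.hyps(1)) auto
    with lists True show ?thesis by simp
  next
    case False
    have "Min A \<le> m"
      using Suc.prems(1,4) by simp
    have "\<not> Min B < Min A"
    proof
      assume less: "Min B < Min A"
      then have "Min B \<in> B - A"
        using mins Suc.prems(1) by (auto dest: Min_le)
      then have "m < Min B"
        using Suc.prems(5) by blast
      with \<open>Min A \<le> m\<close> less show False by simp
    qed
    with False have "Min A < Min B" by simp
    moreover have "length (sorted_list_of_set (A - {Min A})) = length (sorted_list_of_set (B - {Min B}))"
      using Suc.prems(1-3) mins by simp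
    ultimately show ?thesis
      using lists by simp
  qed
qed

lemma pos_list_lex_less:
  assumes "finite E" "inj_on (inv \<tau>) E" "b \<subseteq> E" "b' \<subseteq> E" "card b = card b'"
    and "m \<in> b - b'" "\<forall>x\<in>b' - b. inv \<tau> m < inv \<tau> x"
  shows "(pos_list \<tau> b, pos_list \<tau> b') \<in> lex less_than"
  unfolding pos_list_def
proof (rule sorted_list_of_set_lex_less)
  have "inj_on (inv \<tau>) b" "inj_on (inv \<tau>) b'"
    using assms(2-4) by (auto intro: inj_on_subset)
  then show "card (inv \<tau> ` b) = card (inv \<tau> ` b')"
    using assms(5) by (simp add: card_image)
  show "finite (inv \<tau> ` b)" "finite (inv \<tau> ` b')"
    using assms(1,3,4) finite_subset by blast+
  show "inv \<tau> m \<in> inv \<tau> ` b - inv \<tau> ` b'"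
    using assms(2-4,6) by (auto dest: inj_onD)
  show "\<forall>y\<in>inv \<tau> ` b' - inv \<tau> ` b. inv \<tau> m < y"
    using assms(7) by blast
qed

lemma lex_first_basis_eqI:
  assumes "b0 \<in> M" and "\<forall>b\<in>M. b \<noteq> b0 \<longrightarrow> (pos_list \<sigma> b0, pos_list \<sigma> b) \<in> lex less_than"
  shows "lex_first_basis \<sigma> M = b0"
  unfolding lex_first_basis_def
proof (rule the_equality)
  fix b
  assume b: "b \<in> M \<and> (\<forall>b'\<in>M. b' \<noteq> b \<longrightarrow> (pos_list \<sigma> b, pos_list \<sigma> b') \<in> lex less_than)"
  show "b = b0"
    using b assms wf_not_sym[OF wf_lex[OF wf_less_than]] by blast
qed (use assms in blast)

lemma rev_perm_permutes:
  assumes "\<sigma> permutes {0..n}"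
  shows "rev_perm n \<sigma> permutes {0..n}"
proof -
  let ?r = "\<lambda>i. if i \<le> n then n - i else i"
  have "?r permutes {0..n}"
    by (rule bij_imp_permutes) (auto intro!: bij_betw_byWitness[where f' = ?r])
  moreover have "rev_perm n \<sigma> = \<sigma> \<circ> ?r"
    by (auto simp: rev_perm_def fun_eq_iff)
  ultimately show ?thesis
    using assms by (simp add: permutes_compose)
qed

lemma inv_rev_perm:
  assumes \<sigma>: "\<sigma> permutes {0..n}" and "x \<le> n"
  shows "inv (rev_perm n \<sigma>) x = n - inv \<sigma> x"
proof -
  have "inv \<sigma> x \<le> n"
    using permutes_in_image[OF permutes_inv[OF \<sigma>]] \<open>x \<le> n\<close> by simp
  then have "rev_perm n \<sigma> (n - inv \<sigma> x) = x"
    by (simp add: rev_perm_def permutes_inverses[OF \<sigma>])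
  then show ?thesis
    by (simp add: permutes_inv_eq[OF rev_perm_permutes[OF \<sigma>]])
qed

lemma matroid_obtain_max_weight_basis:
  assumes M: "matroid E M"
  obtains b0 where "b0 \<in> M" "\<forall>b\<in>M. pow2_weight p b \<le> pow2_weight p b0"
proof -
  have "finite M" "M \<noteq> {}"
    using M matroid_finite_bases[OF M] by (simp_all add: matroid_def)
  then have "Max (pow2_weight p ` M) \<in> pow2_weight p ` M"
    by simp
  then obtain b0 where "b0 \<in> M" "pow2_weight p b0 = Max (pow2_weight p ` M)"
    by auto
  with \<open>finite M\<close> show ?thesis
    using that by simp
qed

lemma lex_first_basis_rev_perm:
  assumes M: "matroid {0..n} M" and \<sigma>: "\<sigma> permutes {0..n}"
    and b0: "b0 \<in> M" and max: "\<forall>b\<in>M. pow2_weight (inv \<sigma>) b \<le> pow2_weight (inv \<sigma>) b0"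
  shows "lex_first_basis (rev_perm n \<sigma>) M = b0"
proof (rule lex_first_basis_eqI[OF b0], intro ballI impI)
  fix b assume b: "b \<in> M" "b \<noteq> b0"
  then obtain m where m: "m \<in> b0 - b" "\<forall>x\<in>b - b0. inv \<sigma> x < inv \<sigma> m"
    using max_weight_basis_max_symdiff[OF M permutes_inj_on[OF permutes_inv[OF \<sigma>]] b0 max] by blast
  have "\<forall>x\<in>b - b0. inv (rev_perm n \<sigma>) m < inv (rev_perm n \<sigma>) x"
  proof
    fix x assume x: "x \<in> b - b0"
    have "m \<le> n" "x \<le> n"
      using m(1) x matroid_basis_subset[OF M] b0 b(1) by fastforce+
    moreover have "inv \<sigma> m \<le> n"
      using permutes_in_image[OF permutes_inv[OF \<sigma>]] \<open>m \<le> n\<close> by simp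
    moreover have "inv \<sigma> x < inv \<sigma> m"
      using m(2) x by blast
    ultimately show "inv (rev_perm n \<sigma>) m < inv (rev_perm n \<sigma>) x"
      by (simp add: inv_rev_perm[OF \<sigma>])
  qed
  moreover have "inj_on (inv (rev_perm n \<sigma>)) {0..n}"
    using permutes_inj_on[OF permutes_inv[OF rev_perm_permutes[OF \<sigma>]]] .
  ultimately show "(pos_list (rev_perm n \<sigma>) b0, pos_list (rev_perm n \<sigma>) b) \<in> lex less_than"
    using matroid_basis_subset[OF M] matroid_bases_card_eq[OF M b0 b(1)] b0 b(1) m(1)
    by (intro pos_list_lex_less) simp_all
qed

lemma lex_first_basis_matroid_dual:
  assumes M: "matroid {0..n} M" and \<sigma>: "\<sigma> permutes {0..n}"
    and b0: "b0 \<in> M" and max: "\<forall>b\<in>M. pow2_weight (inv \<sigma>) b \<le> pow2_weight (inv \<sigma>) b0"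
  shows "lex_first_basis \<sigma> (matroid_dual {0..n} M) = {0..n} - b0"
proof (rule lex_first_basis_eqI)
  let ?E = "{0..n}"
  show "?E - b0 \<in> matroid_dual ?E M"
    using b0 by (simp add: matroid_dual_def)
  show "\<forall>c\<in>matroid_dual ?E M. c \<noteq> ?E - b0 \<longrightarrow> (pos_list \<sigma> (?E - b0), pos_list \<sigma> c) \<in> lex less_than"
  proof (intro ballI impI)
    fix c assume "c \<in> matroid_dual ?E M" "c \<noteq> ?E - b0"
    then obtain b where b: "b \<in> M" "b \<noteq> b0" and c: "c = ?E - b"
      unfolding matroid_dual_def by blast
    have inj: "inj_on (inv \<sigma>) ?E"
      using permutes_inj_on[OF permutes_inv[OF \<sigma>]] .
    obtain m where m: "m \<in> b - b0" "\<forall>x\<in>b0 - b. inv \<sigma> m < inv \<sigma> x"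
      using max_weight_basis_min_symdiff[OF M inj b0 max b] by blast
    have sub: "b0 \<subseteq> ?E" "b \<subseteq> ?E"
      using matroid_basis_subset[OF M] b0 b(1) by blast+
    then have "card (?E - b0) = card (?E - b)"
      using matroid_bases_card_eq[OF M b0 b(1)] by (simp add: card_Diff_subset finite_subset)
    then show "(pos_list \<sigma> (?E - b0), pos_list \<sigma> c) \<in> lex less_than"
      unfolding c using inj m sub by (intro pos_list_lex_less[where m = m]) auto
  qed
qed

definition total_deg :: "(nat \<Rightarrow>\<^sub>0 nat) \<Rightarrow> nat" where
  "total_deg m = (\<Sum>i\<in>Poly_Mapping.keys m. Poly_Mapping.lookup m i)"

lemma total_deg_eq_sum:
  "finite S \<Longrightarrow> Poly_Mapping.keys m \<subseteq> S \<Longrightarrow> total_deg m = (\<Sum>i\<in>S. Poly_Mapping.lookup m i)"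
  unfolding total_deg_def by (rule sum.mono_neutral_left) (auto simp: in_keys_iff)

lemma total_deg_add: "total_deg (a + b) = total_deg a + total_deg b"
proof -
  let ?S = "Poly_Mapping.keys a \<union> Poly_Mapping.keys b"
  have "total_deg (a + b) = (\<Sum>i\<in>?S. Poly_Mapping.lookup (a + b) i)"
    by (rule total_deg_eq_sum) (auto dest: keys_add[THEN subsetD])
  also have "\<dots> = (\<Sum>i\<in>?S. Poly_Mapping.lookup a i) + (\<Sum>i\<in>?S. Poly_Mapping.lookup b i)"
    by (simp add: lookup_add sum.distrib)
  also have "\<dots> = total_deg a + total_deg b"
    by (subst (1 2) total_deg_eq_sum[where S = ?S]) auto
  finally show ?thesis .
qed

lemma lookup_tneg: "Poly_Mapping.lookup (tneg q) m = (-1) ^ total_deg m * Poly_Mapping.lookup q m"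
proof -
  have "Poly_Mapping.lookup (tneg q) m =
      (\<Sum>m'\<in>Poly_Mapping.keys q. (-1) ^ total_deg m' * Poly_Mapping.lookup q m' when m' = m)"
    unfolding tneg_def total_deg_def by (simp add: lookup_sum lookup_single)
  then show ?thesis
    by (cases "m \<in> Poly_Mapping.keys q") (auto simp: when_def in_keys_iff)
qed

lemma tneg_0 [simp]: "tneg 0 = 0"
  by (rule poly_mapping_eqI) (simp add: lookup_tneg)

lemma tneg_add: "tneg (p + q) = tneg p + tneg q"
  by (rule poly_mapping_eqI) (simp add: lookup_tneg lookup_add algebra_simps)

lemma tneg_sum: "tneg (sum f A) = (\<Sum>x\<in>A. tneg (f x))"
  by (induction A rule: infinite_finite_induct) (auto simp: tneg_add)

lemma tneg_single: "tneg (Poly_Mapping.single m c) = Poly_Mapping.single m ((-1) ^ total_deg m * c)"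
  by (rule poly_mapping_eqI) (simp add: lookup_tneg lookup_single when_def)

lemma tneg_1 [simp]: "tneg 1 = 1"
  by (simp flip: single_one add: tneg_single total_deg_def)

lemma tneg_mult: "tneg (p * q) = tneg p * tneg q"
proof -
  have expand: "r = (\<Sum>m\<in>Poly_Mapping.keys r. Poly_Mapping.single m (Poly_Mapping.lookup r m))"
    for r :: tpoly
    by (rule poly_mapping_eqI) (auto simp: lookup_sum lookup_single when_def in_keys_iff)
  have on_singles: "tneg (Poly_Mapping.single a c * Poly_Mapping.single b d)
      = tneg (Poly_Mapping.single a c) * tneg (Poly_Mapping.single b d)" for a b and c d :: int
    by (simp add: mult_single tneg_single total_deg_add power_add mult_ac)
  let ?P = "\<Sum>a\<in>Poly_Mapping.keys p. Poly_Mapping.single a (Poly_Mapping.lookup p a)"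
  let ?Q = "\<Sum>b\<in>Poly_Mapping.keys q. Poly_Mapping.single b (Poly_Mapping.lookup q b)"
  have "tneg (p * q) = tneg (?P * ?Q)"
    by (simp flip: expand)
  also have "\<dots> = (\<Sum>a\<in>Poly_Mapping.keys p. \<Sum>b\<in>Poly_Mapping.keys q.
      tneg (Poly_Mapping.single a (Poly_Mapping.lookup p a) * Poly_Mapping.single b (Poly_Mapping.lookup q b)))"
    by (simp add: sum_product tneg_sum)
  also have "\<dots> = tneg ?P * tneg ?Q"
    by (simp add: on_singles tneg_sum sum_product)
  also have "\<dots> = tneg p * tneg q"
    by (simp flip: expand)
  finally show ?thesis .
qed

lemma tneg_char_c1: "tneg (char_c1 a) = char_c1 (- a)"
proof -
  have "tneg (of_int c * tvar i) = - (of_int c * tvar i)" for c i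
    by (simp flip: single_of_int add: tvar_def mult_single tneg_single total_deg_def single_uminus)
  then show ?thesis
    by (simp add: char_c1_def tneg_sum sum_negf)
qed

lemma map_poly_tneg_add: "map_poly tneg (p + q) = map_poly tneg p + map_poly tneg q"
  by (rule poly_eqI) (simp add: coeff_map_poly tneg_add)

lemma map_poly_tneg_mult: "map_poly tneg (p * q) = map_poly tneg p * map_poly tneg q"
proof (induction p)
  case 0
  then show ?case by simp
next
  case (pCons a p)
  have "map_poly tneg (pCons a p * q) = map_poly tneg (smult a q + pCons 0 (p * q))"
    by simp
  also have "\<dots> = smult (tneg a) (map_poly tneg q) + pCons 0 (map_poly tneg p * map_poly tneg q)"
    by (simp add: map_poly_tneg_add map_poly_smult tneg_mult map_poly_pCons pCons.IH)
  also have "\<dots> = map_poly tneg (pCons a p) * map_poly tneg q"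
    by (simp add: map_poly_pCons)
  finally show ?case .
qed

lemma map_poly_tneg_power: "map_poly tneg (p ^ k) = map_poly tneg p ^ k"
  by (induction k) (simp_all add: map_poly_tneg_mult)

lemma map_poly_tneg_prod: "map_poly tneg (\<Prod>x\<in>A. f x) = (\<Prod>x\<in>A. map_poly tneg (f x))"
  by (induction A rule: infinite_finite_induct) (simp_all add: map_poly_tneg_mult)

lemma lookup_lflip: "Poly_Mapping.lookup (lflip p) a = Poly_Mapping.lookup p (- a)"
proof -
  have "Poly_Mapping.lookup (lflip p) a =
      (\<Sum>b\<in>Poly_Mapping.keys p. if b = - a then Poly_Mapping.lookup p b else 0)"
    unfolding lflip_def lookup_sum lookup_single when_def by (intro sum.cong) auto
  then show ?thesis
    by (simp add: in_keys_iff)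
qed

lemma keys_lflip: "Poly_Mapping.keys (lflip p) = uminus ` Poly_Mapping.keys p"
  by (force simp: in_keys_iff lookup_lflip)

lemma map_poly_tneg_chernT: "map_poly tneg (chernT p) = chernT (lflip p)"
proof -
  have "chernT (lflip p) = (\<Prod>a\<in>Poly_Mapping.keys p. [:1, char_c1 (- a):] ^ nat (Poly_Mapping.lookup p a))"
    unfolding chernT_def keys_lflip by (simp add: prod.reindex lookup_lflip)
  then show ?thesis
    by (simp add: chernT_def map_poly_tneg_prod map_poly_tneg_power map_poly_pCons tneg_char_c1)
qed

lemma crem_chow_chern_class: "crem_chow n (chern_class F) = chern_class (crem n F)"
  by (simp add: fun_eq_iff crem_chow_def chern_class_def crem_def map_poly_tneg_chernT)

lemma Ceq_chern_classI: "Keq n F G \<Longrightarrow> Ceq n (chern_class F) (chern_class G)"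
  by (simp add: Keq_def Ceq_def chern_class_def)

theorem proposition5p11:
  fixes n :: nat and M :: "nat set set"
  assumes "matroid {0..n} M"
  shows "Keq n (crem n (S_class n M)) (kdual (Q_class n (matroid_dual {0..n} M)))
       \<and> Keq n (crem n (Q_class n M)) (kdual (S_class n (matroid_dual {0..n} M)))
       \<and> Ceq n (crem_chow n (chern_class (S_class n M)))
              (chern_class (kdual (Q_class n (matroid_dual {0..n} M))))
       \<and> Ceq n (crem_chow n (chern_class (Q_class n M)))
              (chern_class (kdual (S_class n (matroid_dual {0..n} M))))"
proof -
  have "Keq n (crem n (S_class n M)) (kdual (Q_class n (matroid_dual {0..n} M)))
      \<and> Keq n (crem n (Q_class n M)) (kdual (S_class n (matroid_dual {0..n} M)))"
    unfolding Keq_def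
  proof (intro conjI allI impI)
    fix \<sigma> assume \<sigma>: "\<sigma> permutes {0..n}"
    obtain b0 where b0: "b0 \<in> M" and max: "\<forall>b\<in>M. pow2_weight (inv \<sigma>) b \<le> pow2_weight (inv \<sigma>) b0"
      using matroid_obtain_max_weight_basis[OF assms] .
    note lex_first = lex_first_basis_rev_perm[OF assms \<sigma> b0 max]
      lex_first_basis_matroid_dual[OF assms \<sigma> b0 max]
    have "{0..n} - ({0..n} - b0) = b0"
      using matroid_basis_subset[OF assms b0] by blast
    then show "crem n (S_class n M) \<sigma> = kdual (Q_class n (matroid_dual {0..n} M)) \<sigma>"
      by (simp add: crem_def kdual_def S_class_def Q_class_def lex_first)
    show "crem n (Q_class n M) \<sigma> = kdual (S_class n (matroid_dual {0..n} M)) \<sigma>"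
      by (simp add: crem_def kdual_def S_class_def Q_class_def lex_first)
  qed
  then show ?thesis
    by (simp add: crem_chow_chern_class Ceq_chern_classI)
qed

end
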